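(* Let $A\in\mathbf{R}^{n\times n}$, $C_i\in\mathbf{R}^{m_i\times n}$ ($i=1,\ldots,N$), $H\in\mathbf{R}^{p\times n}$, and let $\mathcal{L}$ be the Laplacian of a directed graph on $N$ nodes. Set $\bar A=I_N\otimes A$, $\bar C=\mathrm{diag}[C_1,\ldots,C_N]$, $\bar H=\mathcal{L}\otimes H$. Then the pair $\left(\begin{bmatrix}\bar C\\ \bar H\end{bmatrix},\bar A\right)$ is detectable if and only if $$\bar{\mathcal{O}}\cap \prod_{i=1}^N\mathcal{C}_i=\{0\},$$ where $\mathcal{C}_i$ is the undetectable subspace of $(C_i,A)$ and $\bar{\mathcal{O}}=\bigcap_{l=1}^{nN}\operatorname{Ker}(\bar H\bar A^{l-1})$ is the unobservable subspace of $(\bar H,\bar A)$.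
   Context: Directed graph $\mathbf{G}=(\mathbf{V},\mathbf{E})$, $\mathbf{V}=\{1,\ldots,N\}$, without self-loops; $(j,i)\in\mathbf{E}$ denotes an edge from $j$ to $i$. Adjacency matrix $\mathbf{A}=[\mathbf{a}_{ij}]$ with $\mathbf{a}_{ij}=1$ if $(j,i)\in\mathbf{E}$ and $0$ otherwise; $p_i$ is the in-degree of node $i$; the Laplacian is $\mathcal{L}=\mathrm{diag}[p_1,\ldots,p_N]-\mathbf{A}$. For a matrix $F\in\mathbf{R}^{n\times n}$ with minimal polynomial $\alpha_F(s)$, factor $\alpha_F=\alpha_F^-\alpha_F^+$ where the zeros of $\alpha_F^-$ lie in the open left half-plane and those of $\alpha_F^+$ in the closed right half-plane. The undetectable subspace of a pair $(G,F)$, $G\in\mathbf{R}^{m\times n}$, is $\bigcap_{l=1}^n\operatorname{Ker}(GF^{l-1})\cap\operatorname{Ker}\alpha_F^+(F)$; the pair is detectable iff this subspace is $\{0\}$. $\prod_{i=1}^N\mathcal{C}_i\subseteq\mathbf{R}^{nN}$ denotes the set of stacked vectors $[x_1';\ldots;x_N']'$ with $x_i\in\mathcal{C}_i$. *)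

theory Defs
  imports "Jordan_Normal_Form.Matrix_Kernel" "HOL-Computational_Algebra.Polynomial"
begin

definition mat_poly_eval :: "nat \<Rightarrow> real poly \<Rightarrow> real mat \<Rightarrow> real mat" where
  "mat_poly_eval n p F = foldr (\<lambda>c M. c \<cdot>\<^sub>m 1\<^sub>m n + F * M) (coeffs p) (0\<^sub>m n n)"

definition min_poly :: "nat \<Rightarrow> real mat \<Rightarrow> real poly" where
  "min_poly n F = (THE p. lead_coeff p = 1 \<and> mat_poly_eval n p F = 0\<^sub>m n n \<and>
      (\<forall>q. q \<noteq> 0 \<longrightarrow> mat_poly_eval n q F = 0\<^sub>m n n \<longrightarrow> degree p \<le> degree q))"

(* alpha^+ : the (monic, real) factor of a real polynomial collecting all its
   (complex) zeros in the closed right half-plane, with multiplicities *)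
definition unstable_part :: "real poly \<Rightarrow> real poly" where
  "unstable_part a = (let ac = map_poly complex_of_real a in
     map_poly Re (\<Prod>z\<in>{z. poly ac z = 0 \<and> Re z \<ge> 0}. [:- z, 1:] ^ order z ac))"

definition undetectable_subspace :: "nat \<Rightarrow> real mat \<Rightarrow> real mat \<Rightarrow> real vec set" where
  "undetectable_subspace n G F =
     {x \<in> carrier_vec n. \<forall>l\<in>{1..n}. (G * F ^\<^sub>m (l - 1)) *\<^sub>v x = 0\<^sub>v (dim_row G)}
     \<inter> mat_kernel (mat_poly_eval n (unstable_part (min_poly n F)) F)"

definition detectable :: "nat \<Rightarrow> real mat \<Rightarrow> real mat \<Rightarrow> bool" where
  "detectable n G F \<longleftrightarrow> undetectable_subspace n G F = {0\<^sub>v n}"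

definition unobservable_subspace :: "nat \<Rightarrow> real mat \<Rightarrow> real mat \<Rightarrow> real vec set" where
  "unobservable_subspace n G F =
     {x \<in> carrier_vec n. \<forall>l\<in>{1..n}. (G * F ^\<^sub>m (l - 1)) *\<^sub>v x = 0\<^sub>v (dim_row G)}"

definition kron :: "real mat \<Rightarrow> real mat \<Rightarrow> real mat" where
  "kron A B = mat (dim_row A * dim_row B) (dim_col A * dim_col B)
     (\<lambda>(i,j). A $$ (i div dim_row B, j div dim_col B) * B $$ (i mod dim_row B, j mod dim_col B))"

definition vstack :: "real mat \<Rightarrow> real mat \<Rightarrow> real mat" where
  "vstack A B = mat (dim_row A + dim_row B) (dim_col A)
     (\<lambda>(i,j). if i < dim_row A then A $$ (i,j) else B $$ (i - dim_row A, j))"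

definition row_off :: "(nat \<Rightarrow> real mat) \<Rightarrow> nat \<Rightarrow> nat" where
  "row_off C i = (\<Sum>k<i. dim_row (C k))"

definition block_diag :: "nat \<Rightarrow> nat \<Rightarrow> (nat \<Rightarrow> real mat) \<Rightarrow> real mat" where
  "block_diag N n C = mat (row_off C N) (N * n)
     (\<lambda>(r,c). let i = (LEAST i. r < row_off C (Suc i)) in
        if c div n = i then C i $$ (r - row_off C i, c mod n) else 0)"

(* Laplacian of a directed graph on nodes {0..<N}; (j,i) \<in> E is an edge from j to i;
   a_ij = 1 iff (j,i) \<in> E; p_i = in-degree of i *)
definition laplacian :: "nat \<Rightarrow> (nat \<times> nat) set \<Rightarrow> real mat" where
  "laplacian N E = mat N N (\<lambda>(i,j).
     (if i = j then real (card {k. k < N \<and> (k,i) \<in> E}) else 0) - (if (j,i) \<in> E then 1 else 0))"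

definition prod_subspaces :: "nat \<Rightarrow> nat \<Rightarrow> (nat \<Rightarrow> real vec set) \<Rightarrow> real vec set" where
  "prod_subspaces N n S = {x \<in> carrier_vec (N * n). \<forall>i<N. vec n (\<lambda>k. x $ (i * n + k)) \<in> S i}"

end

theory Submission
  imports Defs "Jordan_Normal_Form.VS_Connect"
begin

text \<open>
  The matrix \<open>I\<^sub>N \<otimes> A\<close> acts on every \<open>n\<close>-block of a vector as \<open>A\<close>, and so does every
  polynomial in it, with the same polynomial applied to \<open>A\<close>. Hence \<open>I\<^sub>N \<otimes> A\<close> and \<open>A\<close> have the same
  annihilating polynomials and the same minimal polynomial, and the kernel of \<open>\<alpha>\<^sup>+(I\<^sub>N \<otimes> A)\<close> is the
  product of \<open>N\<close> copies of the kernel of \<open>\<alpha>\<^sup>+(A)\<close>. In the same way the observability conditions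
  of \<open>diag[C\<^sub>1, \<dots>, C\<^sub>N]\<close> split into the conditions \<open>C\<^sub>i A\<^sup>l x\<^sub>i = 0\<close>, and since the Krylov vectors
  \<open>A\<^sup>l v\<close> become linearly dependent after at most \<open>n\<close> steps, requiring them for \<open>l < nN\<close> is the
  same as requiring them for \<open>l < n\<close>. Stacking \<open>H\<close> below the block-diagonal output matrix
  intersects the unobservable subspaces, so the undetectable subspace of the networked pair is the
  unobservable subspace of \<open>(L \<otimes> H, I\<^sub>N \<otimes> A)\<close> intersected with the product of the local undetectable
  subspaces.
\<close>

lemma mult_mat_vec_zero [simp]: "A \<in> carrier_mat r c \<Longrightarrow> A *\<^sub>v 0\<^sub>v c = (0\<^sub>v r :: 'a :: semiring_0 vec)"
  by (intro eq_vecI) auto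

lemma zero_mat_mult_vec [simp]: "x \<in> carrier_vec c \<Longrightarrow> 0\<^sub>m r c *\<^sub>v x = (0\<^sub>v r :: 'a :: semiring_0 vec)"
  by (intro eq_vecI) auto

lemma smult_mat_mult_vec:
  "x \<in> carrier_vec (dim_col X) \<Longrightarrow> (c \<cdot>\<^sub>m X) *\<^sub>v x = c \<cdot>\<^sub>v (X *\<^sub>v (x :: 'a :: comm_semiring_0 vec))"
  by (intro eq_vecI) (auto simp: scalar_prod_def sum_distrib_left mult.assoc intro!: sum.cong)

lemma mat_eq_0_iff_mult_vec:
  assumes "X \<in> carrier_mat r c"
  shows "X = 0\<^sub>m r c \<longleftrightarrow> (\<forall>x\<in>carrier_vec c. X *\<^sub>v x = (0\<^sub>v r :: 'a :: semiring_1 vec))"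
proof
  assume zero: "\<forall>x\<in>carrier_vec c. X *\<^sub>v x = 0\<^sub>v r"
  show "X = 0\<^sub>m r c"
  proof (rule eq_matI)
    fix i j assume "i < dim_row (0\<^sub>m r c :: 'a mat)" "j < dim_col (0\<^sub>m r c :: 'a mat)"
    moreover from this have "X $$ (i, j) = (X *\<^sub>v unit_vec c j) $ i" using assms by auto
    ultimately show "X $$ (i, j) = 0\<^sub>m r c $$ (i, j)" using zero by simp
  qed (use assms in auto)
qed (use assms in auto)

lemma pow_mat_Suc_left: "A \<in> carrier_mat n n \<Longrightarrow> A ^\<^sub>m Suc k = A * A ^\<^sub>m k"
proof (induction k)
  case (Suc k)
  have "A ^\<^sub>m Suc (Suc k) = (A * A ^\<^sub>m k) * A" using Suc by simp
  also have "\<dots> = A * (A ^\<^sub>m k * A)" using Suc.prems by (intro assoc_mult_mat) auto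
  finally show ?case by simp
qed simp

lemma pow_mat_mult_vec_carrier [simp]:
  "A \<in> carrier_mat n n \<Longrightarrow> v \<in> carrier_vec n \<Longrightarrow> A ^\<^sub>m i *\<^sub>v v \<in> carrier_vec n"
  by (intro mult_mat_vec_carrier[of _ n n]) auto

lemma mult_pow_mat_vec_Suc:
  "A \<in> carrier_mat n n \<Longrightarrow> v \<in> carrier_vec n \<Longrightarrow> A *\<^sub>v (A ^\<^sub>m k *\<^sub>v v) = A ^\<^sub>m Suc k *\<^sub>v v"
  by (subst pow_mat_Suc_left[of A n]) (simp_all add: assoc_mult_mat_vec[of _ n n _ n])

lemma sum_lessThan_mult_blocks:
  fixes f :: "nat \<Rightarrow> 'a :: comm_monoid_add"
  shows "(\<Sum>j<N * n. f j) = (\<Sum>i<N. \<Sum>k<n. f (i * n + k))"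
proof (induction N)
  case (Suc N)
  have "{..<Suc N * n} = {..<N * n} \<union> {N * n..<N * n + n}" by auto
  then have "(\<Sum>j<Suc N * n. f j) = (\<Sum>j<N * n. f j) + (\<Sum>j\<in>{N * n..<N * n + n}. f j)"
    by (simp add: sum.union_disjoint ivl_disj_int_one(2) lessThan_atLeast0)
  also have "(\<Sum>j\<in>{N * n..<N * n + n}. f j) = (\<Sum>k<n. f (N * n + k))"
    by (rule sum.reindex_bij_witness[of _ "\<lambda>k. N * n + k" "\<lambda>j. j - N * n"]) auto
  finally show ?case using Suc by simp
qed simp

section \<open>Block vectors\<close>

definition vec_block :: "nat \<Rightarrow> nat \<Rightarrow> real vec \<Rightarrow> real vec" where
  "vec_block n i x = vec n (\<lambda>k. x $ (i * n + k))"

lemma vec_block_carrier [simp]: "vec_block n i x \<in> carrier_vec n" "dim_vec (vec_block n i x) = n"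
  by (auto simp: vec_block_def)

lemma index_vec_block [simp]: "k < n \<Longrightarrow> vec_block n i x $ k = x $ (i * n + k)"
  by (simp add: vec_block_def)

lemma block_index_less: "i < N \<Longrightarrow> k < n \<Longrightarrow> i * n + k < N * (n::nat)"
proof -
  assume "i < N" "k < n"
  then have "i * n + k < Suc i * n" by simp
  also have "\<dots> \<le> N * n" using \<open>i < N\<close> by (intro mult_le_mono1) simp
  finally show ?thesis .
qed

lemma vec_eq_iff_blocks:
  assumes "x \<in> carrier_vec (N * n)" "y \<in> carrier_vec (N * n)"
  shows "x = y \<longleftrightarrow> (\<forall>i<N. vec_block n i x = vec_block n i y)"
proof
  assume blocks: "\<forall>i<N. vec_block n i x = vec_block n i y"
  show "x = y"
  proof (rule eq_vecI)
    fix j assume "j < dim_vec y"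
    then have j: "j < N * n" using assms by simp
    then have "j div n < N" "j mod n < n"
      by (simp_all add: less_mult_imp_div_less) (cases n; simp)
    moreover have "j = j div n * n + j mod n" by simp
    ultimately show "x $ j = y $ j"
      using blocks index_vec_block[of "j mod n" n "j div n"] by metis
  qed (use assms in simp)
qed simp

lemma vec_block_add:
  "x \<in> carrier_vec (N * n) \<Longrightarrow> y \<in> carrier_vec (N * n) \<Longrightarrow> i < N \<Longrightarrow>
    vec_block n i (x + y) = vec_block n i x + vec_block n i y"
  by (intro eq_vecI) (auto simp: block_index_less)

lemma vec_block_smult:
  "x \<in> carrier_vec (N * n) \<Longrightarrow> i < N \<Longrightarrow> vec_block n i (c \<cdot>\<^sub>v x) = c \<cdot>\<^sub>v vec_block n i x"
  by (intro eq_vecI) (auto simp: block_index_less)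

lemma vec_block_zero: "i < N \<Longrightarrow> vec_block n i (0\<^sub>v (N * n)) = 0\<^sub>v n"
  by (intro eq_vecI) (auto simp: block_index_less)

lemma mem_prod_subspaces_iff:
  "x \<in> prod_subspaces N n S \<longleftrightarrow> x \<in> carrier_vec (N * n) \<and> (\<forall>i<N. vec_block n i x \<in> S i)"
  by (simp add: prod_subspaces_def vec_block_def)

lemma prod_subspaces_Int:
  "prod_subspaces N n S \<inter> prod_subspaces N n T = prod_subspaces N n (\<lambda>i. S i \<inter> T i)"
  by (auto simp: mem_prod_subspaces_iff)

section \<open>Matrices acting blockwise\<close>

definition acts_blockwise :: "nat \<Rightarrow> nat \<Rightarrow> real mat \<Rightarrow> real mat \<Rightarrow> bool" where
  "acts_blockwise N n X M \<longleftrightarrow> X \<in> carrier_mat (N * n) (N * n) \<and> M \<in> carrier_mat n n \<and>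
     (\<forall>x\<in>carrier_vec (N * n). \<forall>i<N. vec_block n i (X *\<^sub>v x) = M *\<^sub>v vec_block n i x)"

lemma acts_blockwise_kron_one:
  assumes M: "M \<in> carrier_mat n n"
  shows "acts_blockwise N n (kron (1\<^sub>m N) M) M"
  unfolding acts_blockwise_def
proof (intro conjI ballI allI impI)
  show "kron (1\<^sub>m N) M \<in> carrier_mat (N * n) (N * n)" using M by (simp add: kron_def)
  fix x :: "real vec" and i assume x: "x \<in> carrier_vec (N * n)" and i: "i < N"
  show "vec_block n i (kron (1\<^sub>m N) M *\<^sub>v x) = M *\<^sub>v vec_block n i x"
  proof (rule eq_vecI)
    fix k assume "k < dim_vec (M *\<^sub>v vec_block n i x)"
    then have k: "k < n" using M by simp
    have ik: "i * n + k < N * n" using block_index_less[OF i k] .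
    have "vec_block n i (kron (1\<^sub>m N) M *\<^sub>v x) $ k = (\<Sum>j<N * n. kron (1\<^sub>m N) M $$ (i * n + k, j) * x $ j)"
      using k ik M x by (simp add: kron_def scalar_prod_def atLeast0LessThan)
    also have "\<dots> = (\<Sum>a<N. \<Sum>b<n. kron (1\<^sub>m N) M $$ (i * n + k, a * n + b) * x $ (a * n + b))"
      by (rule sum_lessThan_mult_blocks)
    also have "\<dots> = (\<Sum>a<N. if a = i then (\<Sum>b<n. M $$ (k, b) * x $ (i * n + b)) else 0)"
      using ik M k i block_index_less[of _ N _ n]
      by (intro sum.cong) (auto simp: kron_def intro!: sum.cong)
    also have "\<dots> = (M *\<^sub>v vec_block n i x) $ k"
      using i k M by (simp add: scalar_prod_def atLeast0LessThan)
    finally show "vec_block n i (kron (1\<^sub>m N) M *\<^sub>v x) $ k = (M *\<^sub>v vec_block n i x) $ k" .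
  qed (use M in simp)
qed (use M in simp)

lemma acts_blockwise_add:
  "acts_blockwise N n X M \<Longrightarrow> acts_blockwise N n Y M' \<Longrightarrow> acts_blockwise N n (X + Y) (M + M')"
  unfolding acts_blockwise_def
  by (auto simp: add_mult_distrib_mat_vec[of _ "N * n" "N * n"] add_mult_distrib_mat_vec[of _ n n]
      vec_block_add[of _ N n])

lemma acts_blockwise_mult:
  "acts_blockwise N n X M \<Longrightarrow> acts_blockwise N n Y M' \<Longrightarrow> acts_blockwise N n (X * Y) (M * M')"
  unfolding acts_blockwise_def
  by (auto simp: assoc_mult_mat_vec[of _ "N * n" "N * n"] assoc_mult_mat_vec[of _ n n])

lemma acts_blockwise_smult: "acts_blockwise N n X M \<Longrightarrow> acts_blockwise N n (c \<cdot>\<^sub>m X) (c \<cdot>\<^sub>m M)"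
  unfolding acts_blockwise_def by (auto simp: smult_mat_mult_vec vec_block_smult[of _ N n])

lemma acts_blockwise_one: "acts_blockwise N n (1\<^sub>m (N * n)) (1\<^sub>m n)"
  unfolding acts_blockwise_def by auto

lemma acts_blockwise_zero: "acts_blockwise N n (0\<^sub>m (N * n) (N * n)) (0\<^sub>m n n)"
  unfolding acts_blockwise_def by (auto simp: vec_block_zero)

lemma acts_blockwise_pow: "acts_blockwise N n X M \<Longrightarrow> acts_blockwise N n (X ^\<^sub>m k) (M ^\<^sub>m k)"
proof (induction k)
  case 0
  then have "dim_row X = N * n" "dim_row M = n" by (auto simp: acts_blockwise_def)
  then show ?case using acts_blockwise_one by simp
qed (simp add: acts_blockwise_mult)

lemma acts_blockwise_mat_poly_eval:
  assumes "acts_blockwise N n X M"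
  shows "acts_blockwise N n (mat_poly_eval (N * n) q X) (mat_poly_eval n q M)"
proof -
  have "acts_blockwise N n (foldr (\<lambda>c Y. c \<cdot>\<^sub>m 1\<^sub>m (N * n) + X * Y) cs (0\<^sub>m (N * n) (N * n)))
      (foldr (\<lambda>c Y. c \<cdot>\<^sub>m 1\<^sub>m n + M * Y) cs (0\<^sub>m n n))" for cs
    by (induction cs) (auto intro!: acts_blockwise_add acts_blockwise_smult acts_blockwise_one
        acts_blockwise_mult acts_blockwise_zero assms)
  then show ?thesis unfolding mat_poly_eval_def .
qed

lemma acts_blockwise_mult_vec_eq_0_iff:
  assumes "acts_blockwise N n X M" "x \<in> carrier_vec (N * n)"
  shows "X *\<^sub>v x = 0\<^sub>v (N * n) \<longleftrightarrow> (\<forall>i<N. M *\<^sub>v vec_block n i x = 0\<^sub>v n)"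
proof -
  have "X \<in> carrier_mat (N * n) (N * n)" using assms(1) by (simp add: acts_blockwise_def)
  then have "X *\<^sub>v x = 0\<^sub>v (N * n) \<longleftrightarrow> (\<forall>i<N. vec_block n i (X *\<^sub>v x) = vec_block n i (0\<^sub>v (N * n)))"
    using assms(2) by (intro vec_eq_iff_blocks) auto
  with assms show ?thesis by (simp add: acts_blockwise_def vec_block_zero)
qed

lemma acts_blockwise_mat_kernel:
  assumes "acts_blockwise N n X M"
  shows "mat_kernel X = prod_subspaces N n (\<lambda>_. mat_kernel M)"
proof -
  have "X \<in> carrier_mat (N * n) (N * n)" "M \<in> carrier_mat n n"
    using assms by (auto simp: acts_blockwise_def)
  then show ?thesis
    using acts_blockwise_mult_vec_eq_0_iff[OF assms]
    by (auto simp: mat_kernel mem_prod_subspaces_iff)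
qed

lemma acts_blockwise_eq_0_iff:
  assumes "acts_blockwise N n X M" "N > 0"
  shows "X = 0\<^sub>m (N * n) (N * n) \<longleftrightarrow> M = 0\<^sub>m n n"
proof -
  have X: "X \<in> carrier_mat (N * n) (N * n)" and M: "M \<in> carrier_mat n n"
    using assms by (auto simp: acts_blockwise_def)
  have "X = 0\<^sub>m (N * n) (N * n) \<longleftrightarrow> (\<forall>x\<in>carrier_vec (N * n). \<forall>i<N. M *\<^sub>v vec_block n i x = 0\<^sub>v n)"
    using mat_eq_0_iff_mult_vec[OF X] acts_blockwise_mult_vec_eq_0_iff[OF assms(1)] by simp
  also have "\<dots> \<longleftrightarrow> (\<forall>y\<in>carrier_vec n. M *\<^sub>v y = 0\<^sub>v n)"
  proof safe
    fix y :: "real vec"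
    assume zero: "\<forall>x\<in>carrier_vec (N * n). \<forall>i<N. M *\<^sub>v vec_block n i x = 0\<^sub>v n"
      and y: "y \<in> carrier_vec n"
    define x where "x = vec (N * n) (\<lambda>j. if j < n then y $ j else 0)"
    have "vec_block n 0 x = y"
      using y assms(2) block_index_less[of 0 N] by (intro eq_vecI) (auto simp: x_def)
    moreover have "x \<in> carrier_vec (N * n)" by (simp add: x_def)
    ultimately show "M *\<^sub>v y = 0\<^sub>v n" using zero assms(2) by metis
  qed auto
  also have "\<dots> \<longleftrightarrow> M = 0\<^sub>m n n" using mat_eq_0_iff_mult_vec[OF M] by simp
  finally show ?thesis .
qed

lemma min_poly_kron_one:
  assumes "A \<in> carrier_mat n n" "N > 0"
  shows "min_poly (N * n) (kron (1\<^sub>m N) A) = min_poly n A"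
  \<comment> \<open>Both sides are definite descriptions with the same defining predicate, so no existence
    argument for minimal polynomials is needed.\<close>
proof -
  have "mat_poly_eval (N * n) q (kron (1\<^sub>m N) A) = 0\<^sub>m (N * n) (N * n) \<longleftrightarrow> mat_poly_eval n q A = 0\<^sub>m n n"
    for q
    using acts_blockwise_eq_0_iff[OF acts_blockwise_mat_poly_eval[OF acts_blockwise_kron_one] assms(2)]
      assms(1) by simp
  then show ?thesis unfolding min_poly_def by simp
qed

section \<open>Stacked and block-diagonal matrices\<close>

lemma vstack_carrier: "G1 \<in> carrier_mat r1 c \<Longrightarrow> G2 \<in> carrier_mat r2 c \<Longrightarrow> vstack G1 G2 \<in> carrier_mat (r1 + r2) c"
  by (simp add: vstack_def)

lemma vstack_mult_vec_eq_0_iff: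
  assumes G1: "G1 \<in> carrier_mat r1 c" and G2: "G2 \<in> carrier_mat r2 c" and y: "y \<in> carrier_vec c"
  shows "vstack G1 G2 *\<^sub>v y = 0\<^sub>v (r1 + r2) \<longleftrightarrow> G1 *\<^sub>v y = 0\<^sub>v r1 \<and> G2 *\<^sub>v y = 0\<^sub>v r2"
proof -
  have upper: "(vstack G1 G2 *\<^sub>v y) $ i = (G1 *\<^sub>v y) $ i" if "i < r1" for i
    using that G1 G2 y by (simp add: vstack_def scalar_prod_def)
  have lower: "(vstack G1 G2 *\<^sub>v y) $ (r1 + i) = (G2 *\<^sub>v y) $ i" if "i < r2" for i
    using that G1 G2 y by (simp add: vstack_def scalar_prod_def)
  have "(\<forall>i<r1 + r2. (vstack G1 G2 *\<^sub>v y) $ i = 0) \<longleftrightarrow>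
      (\<forall>i<r1. (vstack G1 G2 *\<^sub>v y) $ i = 0) \<and> (\<forall>i<r2. (vstack G1 G2 *\<^sub>v y) $ (r1 + i) = 0)"
    by (auto, metis add_diff_inverse_nat add_less_cancel_left)
  with upper lower show ?thesis
    using vstack_carrier[OF G1 G2] G1 G2 by (auto simp: vec_eq_iff)
qed

lemma row_off_Suc: "row_off C (Suc i) = row_off C i + dim_row (C i)"
  by (simp add: row_off_def)

lemma row_off_mono: "i \<le> j \<Longrightarrow> row_off C i \<le> row_off C j"
  unfolding row_off_def by (rule sum_mono2) auto

lemma row_off_block_less: "i < N \<Longrightarrow> t < dim_row (C i) \<Longrightarrow> row_off C i + t < row_off C N"
  using row_off_mono[of "Suc i" N C] by (simp add: row_off_Suc)

lemma Least_row_off: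
  assumes "t < dim_row (C i)"
  shows "(LEAST i'. row_off C i + t < row_off C (Suc i')) = i"
proof (rule Least_equality)
  show "row_off C i + t < row_off C (Suc i)" using assms by (simp add: row_off_Suc)
  fix i' assume "row_off C i + t < row_off C (Suc i')"
  then show "i \<le> i'" using row_off_mono[of "Suc i'" i C] by (cases "i \<le> i'") auto
qed

lemma row_off_decomp: "r < row_off C N \<Longrightarrow> \<exists>i<N. \<exists>t<dim_row (C i). r = row_off C i + t"
proof (induction N)
  case (Suc N)
  show ?case
  proof (cases "r < row_off C N")
    case True then show ?thesis using Suc by (meson less_SucI)
  next
    case False
    then show ?thesis using Suc.prems
      by (intro exI[of _ N]) (auto simp: row_off_Suc intro!: exI[of _ "r - row_off C N"])
  qed
qed (simp add: row_off_def)

lemma block_diag_carrier: "block_diag N n C \<in> carrier_mat (row_off C N) (N * n)"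
  by (simp add: block_diag_def)

lemma block_diag_mult_vec_index:
  assumes i: "i < N" and t: "t < dim_row (C i)" and C: "dim_col (C i) = n"
    and y: "y \<in> carrier_vec (N * n)"
  shows "(block_diag N n C *\<^sub>v y) $ (row_off C i + t) = (C i *\<^sub>v vec_block n i y) $ t"
proof -
  have "(block_diag N n C *\<^sub>v y) $ (row_off C i + t) =
      (\<Sum>c<N * n. (if c div n = i then C i $$ (t, c mod n) else 0) * y $ c)"
    using row_off_block_less[of i N t C] i t y
    by (simp add: block_diag_def scalar_prod_def Least_row_off[of t C i, OF t] atLeast0LessThan,
        intro sum.cong, auto)
  also have "\<dots> = (\<Sum>a<N. \<Sum>b<n. (if (a * n + b) div n = i then C i $$ (t, (a * n + b) mod n) else 0)
      * y $ (a * n + b))"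
    by (rule sum_lessThan_mult_blocks)
  also have "\<dots> = (\<Sum>a<N. if a = i then (\<Sum>b<n. C i $$ (t, b) * y $ (i * n + b)) else 0)"
    by (intro sum.cong) (auto intro!: sum.cong sum.neutral)
  also have "\<dots> = (C i *\<^sub>v vec_block n i y) $ t"
    using i t C by (simp add: scalar_prod_def atLeast0LessThan)
  finally show ?thesis .
qed

lemma block_diag_mult_vec_eq_0_iff:
  assumes C: "\<And>i. i < N \<Longrightarrow> C i \<in> carrier_mat (m i) n" and y: "y \<in> carrier_vec (N * n)"
  shows "block_diag N n C *\<^sub>v y = 0\<^sub>v (row_off C N) \<longleftrightarrow> (\<forall>i<N. C i *\<^sub>v vec_block n i y = 0\<^sub>v (m i))"
proof -
  have "block_diag N n C *\<^sub>v y = 0\<^sub>v (row_off C N) \<longleftrightarrow>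
      (\<forall>r<row_off C N. (block_diag N n C *\<^sub>v y) $ r = 0)"
    using block_diag_carrier[of N n C] by (auto simp: vec_eq_iff)
  also have "\<dots> \<longleftrightarrow> (\<forall>i<N. \<forall>t<dim_row (C i). (block_diag N n C *\<^sub>v y) $ (row_off C i + t) = 0)"
    using row_off_block_less row_off_decomp by metis
  also have "\<dots> \<longleftrightarrow> (\<forall>i<N. \<forall>t<m i. (C i *\<^sub>v vec_block n i y) $ t = 0)"
    using block_diag_mult_vec_index[OF _ _ _ y] C by (metis carrier_matD)
  also have "\<dots> \<longleftrightarrow> (\<forall>i<N. C i *\<^sub>v vec_block n i y = 0\<^sub>v (m i))"
    using C by (auto simp: vec_eq_iff)
  finally show ?thesis .
qed

section \<open>Krylov sets\<close>

definition krylov_set :: "'a :: semiring_1 mat \<Rightarrow> 'a vec \<Rightarrow> nat \<Rightarrow> 'a vec set" where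
  "krylov_set A v k = (\<lambda>i. A ^\<^sub>m i *\<^sub>v v) ` {..<k}"

lemma krylov_set_carrier:
  "A \<in> carrier_mat n n \<Longrightarrow> v \<in> carrier_vec n \<Longrightarrow> krylov_set A v k \<subseteq> carrier_vec n"
  by (auto simp: krylov_set_def)

lemma krylov_set_Suc: "krylov_set A v (Suc k) = insert (A ^\<^sub>m k *\<^sub>v v) (krylov_set A v k)"
  by (auto simp: krylov_set_def lessThan_Suc)

context vec_space
begin

lemma submodule_mat_preimage:
  assumes B: "B \<in> carrier_mat r n" and zero: "0\<^sub>v r \<in> U"
    and add: "\<And>u w. u \<in> U \<Longrightarrow> w \<in> U \<Longrightarrow> u + w \<in> U"
    and smult: "\<And>c u. u \<in> U \<Longrightarrow> c \<cdot>\<^sub>v u \<in> U"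
  shows "submodule class_ring {u \<in> carrier_vec n. B *\<^sub>v u \<in> U} V"
  unfolding submodule_def
  using B zero add smult module_axioms
  by (auto simp: mult_add_distrib_mat_vec[OF B] mult_mat_vec[OF B])

lemma krylov_set_eventually_dependent:
  assumes A: "A \<in> carrier_mat n n" and v: "v \<in> carrier_vec n"
  shows "\<exists>k\<le>n. A ^\<^sub>m k *\<^sub>v v \<in> span (krylov_set A v k)"
proof (rule ccontr)
  assume "\<not> ?thesis"
  then have new: "A ^\<^sub>m k *\<^sub>v v \<notin> span (krylov_set A v k)" if "k \<le> n" for k
    using that by auto
  have "lin_indpt (krylov_set A v k) \<and> card (krylov_set A v k) = k" if "k \<le> Suc n" for k
    using that
  proof (induction k)
    case 0 then show ?case by (simp add: krylov_set_def lin_dep_def)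
  next
    case (Suc k)
    then have indpt: "lin_indpt (krylov_set A v k)" and card: "card (krylov_set A v k) = k"
      and new_k: "A ^\<^sub>m k *\<^sub>v v \<notin> span (krylov_set A v k)" using new by auto
    have S: "krylov_set A v k \<subseteq> carrier_vec n" using krylov_set_carrier[OF A v] .
    have notin: "A ^\<^sub>m k *\<^sub>v v \<notin> krylov_set A v k" using new_k in_own_span[OF S] by auto
    have "A ^\<^sub>m k *\<^sub>v v \<in> carrier_vec n" using A v by simp
    then have "lin_indpt (insert (A ^\<^sub>m k *\<^sub>v v) (krylov_set A v k))"
      using lin_dep_iff_in_span[OF S indpt _ notin] new_k by simp
    moreover have "card (insert (A ^\<^sub>m k *\<^sub>v v) (krylov_set A v k)) = Suc k"
      using notin card by (simp add: krylov_set_def)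
    ultimately show ?case by (simp add: krylov_set_Suc)
  qed
  then have "lin_indpt (krylov_set A v (Suc n))" "card (krylov_set A v (Suc n)) = Suc n" by auto
  with li_le_dim(2)[OF fin_dim krylov_set_carrier[OF A v]] dim_is_n show False by fastforce
qed

lemma krylov_span_mat_invariant:
  assumes A: "A \<in> carrier_mat n n" and v: "v \<in> carrier_vec n"
    and dep: "A ^\<^sub>m k *\<^sub>v v \<in> span (krylov_set A v k)"
    and u: "u \<in> span (krylov_set A v k)"
  shows "A *\<^sub>v u \<in> span (krylov_set A v k)"
proof -
  let ?K = "span (krylov_set A v k)"
  have S: "krylov_set A v k \<subseteq> carrier_vec n" using krylov_set_carrier[OF A v] .
  have K: "submodule class_ring ?K V" using span_is_submodule[OF S] .
  have "submodule class_ring {u \<in> carrier_vec n. A *\<^sub>v u \<in> ?K} V"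
    using submodule.zero_closed[OF K] submodule.m_closed[OF K] submodule.smult_closed[OF K]
    by (intro submodule_mat_preimage[OF A]) auto
  moreover have "krylov_set A v k \<subseteq> {u \<in> carrier_vec n. A *\<^sub>v u \<in> ?K}"
  proof
    fix w assume "w \<in> krylov_set A v k"
    then obtain i where i: "i < k" and w: "w = A ^\<^sub>m i *\<^sub>v v" by (auto simp: krylov_set_def)
    have "A ^\<^sub>m Suc i *\<^sub>v v \<in> ?K"
    proof (cases "Suc i = k")
      case False
      then have "A ^\<^sub>m Suc i *\<^sub>v v \<in> krylov_set A v k"
        using i unfolding krylov_set_def by (intro imageI) simp
      then show ?thesis using in_own_span[OF S] by auto
    qed (use dep in simp)
    then show "w \<in> {u \<in> carrier_vec n. A *\<^sub>v u \<in> ?K}"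
      using w A v by (simp add: mult_pow_mat_vec_Suc)
  qed
  ultimately show ?thesis using span_is_subset u by blast
qed

lemma krylov_span_contains_all_powers:
  assumes A: "A \<in> carrier_mat n n" and v: "v \<in> carrier_vec n"
    and dep: "A ^\<^sub>m k *\<^sub>v v \<in> span (krylov_set A v k)"
  shows "A ^\<^sub>m j *\<^sub>v v \<in> span (krylov_set A v k)"
proof (induction j)
  case 0
  show ?case
  proof (cases k)
    case (Suc k')
    then have "A ^\<^sub>m 0 *\<^sub>v v \<in> krylov_set A v k"
      unfolding krylov_set_def by (intro imageI) simp
    then show ?thesis using in_own_span[OF krylov_set_carrier[OF A v]] by auto
  qed (use dep in simp)
next
  case (Suc j)
  then show ?case
    using krylov_span_mat_invariant[OF A v dep Suc] A v by (simp add: mult_pow_mat_vec_Suc)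
qed

end

lemma mult_pow_mat_vec_eq_0_if_lower_powers:
  fixes A C :: "real mat" and v :: "real vec"
  assumes A: "A \<in> carrier_mat n n" and v: "v \<in> carrier_vec n" and C: "C \<in> carrier_mat r n"
    and lower: "\<And>j. j < n \<Longrightarrow> C *\<^sub>v (A ^\<^sub>m j *\<^sub>v v) = 0\<^sub>v r"
  shows "C *\<^sub>v (A ^\<^sub>m j *\<^sub>v v) = 0\<^sub>v r"
proof -
  interpret vec_space "TYPE(real)" n .
  obtain k where "k \<le> n" and dep: "A ^\<^sub>m k *\<^sub>v v \<in> span (krylov_set A v k)"
    using krylov_set_eventually_dependent[OF A v] by blast
  then have "krylov_set A v k \<subseteq> {u \<in> carrier_vec n. C *\<^sub>v u \<in> {0\<^sub>v r}}"
    using lower A v by (auto simp: krylov_set_def)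
  moreover have "submodule class_ring {u \<in> carrier_vec n. C *\<^sub>v u \<in> {0\<^sub>v r}} V"
    by (rule submodule_mat_preimage[OF C]) auto
  ultimately have "span (krylov_set A v k) \<subseteq> {u \<in> carrier_vec n. C *\<^sub>v u \<in> {0\<^sub>v r}}"
    by (rule span_is_subset)
  then show ?thesis using krylov_span_contains_all_powers[OF A v dep] by blast
qed

section \<open>Unobservable and undetectable subspaces\<close>

lemma mem_unobservable_subspace_iff:
  assumes G: "G \<in> carrier_mat r n" and F: "F \<in> carrier_mat n n"
  shows "x \<in> unobservable_subspace n G F \<longleftrightarrow>
    x \<in> carrier_vec n \<and> (\<forall>l<n. G *\<^sub>v (F ^\<^sub>m l *\<^sub>v x) = 0\<^sub>v r)"
proof -
  have shift: "(\<forall>l\<in>{1..n}. P (l - 1)) \<longleftrightarrow> (\<forall>l<n. P l)" for P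
    unfolding image_Suc_lessThan[symmetric] by auto
  show ?thesis
    using G F shift[of "\<lambda>l. G *\<^sub>v (F ^\<^sub>m l *\<^sub>v x) = 0\<^sub>v r"]
    by (auto simp: unobservable_subspace_def assoc_mult_mat_vec[of _ r n _ n])
qed

lemma undetectable_subspace_eq:
  "undetectable_subspace n G F =
    unobservable_subspace n G F \<inter> mat_kernel (mat_poly_eval n (unstable_part (min_poly n F)) F)"
  by (simp add: undetectable_subspace_def unobservable_subspace_def)

lemma unobservable_subspace_vstack:
  assumes "G1 \<in> carrier_mat r1 c" "G2 \<in> carrier_mat r2 c" "F \<in> carrier_mat c c"
  shows "unobservable_subspace c (vstack G1 G2) F = unobservable_subspace c G1 F \<inter> unobservable_subspace c G2 F"
  using assms vstack_carrier[OF assms(1,2)]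
  by (auto simp: mem_unobservable_subspace_iff vstack_mult_vec_eq_0_iff)

lemma unobservable_subspace_block_diag:
  assumes A: "A \<in> carrier_mat n n" and C: "\<And>i. i < N \<Longrightarrow> C i \<in> carrier_mat (m i) n"
  shows "unobservable_subspace (N * n) (block_diag N n C) (kron (1\<^sub>m N) A) =
    prod_subspaces N n (\<lambda>i. unobservable_subspace n (C i) A)"
proof (rule Set.set_eqI)
  fix x
  let ?A = "kron (1\<^sub>m N) A"
  have blockwise: "acts_blockwise N n (?A ^\<^sub>m l) (A ^\<^sub>m l)" for l
    by (rule acts_blockwise_pow[OF acts_blockwise_kron_one[OF A]])
  have "x \<in> unobservable_subspace (N * n) (block_diag N n C) ?A \<longleftrightarrow>
      x \<in> carrier_vec (N * n) \<and> (\<forall>l<N * n. \<forall>i<N. C i *\<^sub>v (A ^\<^sub>m l *\<^sub>v vec_block n i x) = 0\<^sub>v (m i))"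
    using blockwise block_diag_carrier[of N n C] acts_blockwise_kron_one[OF A]
    by (auto simp: mem_unobservable_subspace_iff acts_blockwise_def block_diag_mult_vec_eq_0_iff[OF C])
  also have "\<dots> \<longleftrightarrow> x \<in> carrier_vec (N * n) \<and> (\<forall>i<N. \<forall>l<n. C i *\<^sub>v (A ^\<^sub>m l *\<^sub>v vec_block n i x) = 0\<^sub>v (m i))"
  proof (cases "N = 0")
    case False
    then have "n \<le> N * n" by simp
    then show ?thesis
      using mult_pow_mat_vec_eq_0_if_lower_powers[OF A vec_block_carrier(1) C] by (meson less_le_trans)
  qed simp
  also have "\<dots> \<longleftrightarrow> x \<in> prod_subspaces N n (\<lambda>i. unobservable_subspace n (C i) A)"
    by (auto simp: mem_prod_subspaces_iff mem_unobservable_subspace_iff[OF C A])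
  finally show "x \<in> unobservable_subspace (N * n) (block_diag N n C) ?A \<longleftrightarrow> \<dots>" .
qed

lemma mat_kernel_unstable_part_kron_one:
  assumes "A \<in> carrier_mat n n"
  shows "mat_kernel (mat_poly_eval (N * n) (unstable_part (min_poly (N * n) (kron (1\<^sub>m N) A))) (kron (1\<^sub>m N) A)) =
    prod_subspaces N n (\<lambda>_. mat_kernel (mat_poly_eval n (unstable_part (min_poly n A)) A))"
proof -
  have kernel: "mat_kernel (mat_poly_eval (N * n) q (kron (1\<^sub>m N) A)) =
      prod_subspaces N n (\<lambda>_. mat_kernel (mat_poly_eval n q A))" for q
    by (rule acts_blockwise_mat_kernel[OF acts_blockwise_mat_poly_eval[OF acts_blockwise_kron_one[OF assms]]])
  show ?thesis
  proof (cases "N = 0")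
    case True
    then show ?thesis unfolding kernel by (simp add: prod_subspaces_def)
  next
    case False
    then show ?thesis unfolding kernel by (simp add: min_poly_kron_one[OF assms])
  qed
qed

lemma undetectable_subspace_vstack_block_diag:
  assumes A: "A \<in> carrier_mat n n" and C: "\<And>i. i < N \<Longrightarrow> C i \<in> carrier_mat (m i) n"
    and G: "G \<in> carrier_mat q (N * n)"
  shows "undetectable_subspace (N * n) (vstack (block_diag N n C) G) (kron (1\<^sub>m N) A) =
    unobservable_subspace (N * n) G (kron (1\<^sub>m N) A) \<inter>
    prod_subspaces N n (\<lambda>i. undetectable_subspace n (C i) A)"
proof -
  let ?A = "kron (1\<^sub>m N) A"
  have "?A \<in> carrier_mat (N * n) (N * n)" using A by (simp add: kron_def)
  then have "undetectable_subspace (N * n) (vstack (block_diag N n C) G) ?A =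
      prod_subspaces N n (\<lambda>i. unobservable_subspace n (C i) A) \<inter> unobservable_subspace (N * n) G ?A \<inter>
      prod_subspaces N n (\<lambda>_. mat_kernel (mat_poly_eval n (unstable_part (min_poly n A)) A))"
    by (simp add: undetectable_subspace_eq unobservable_subspace_vstack[OF block_diag_carrier G]
        unobservable_subspace_block_diag[OF A C] mat_kernel_unstable_part_kron_one[OF A])
  also have "\<dots> = unobservable_subspace (N * n) G ?A \<inter> prod_subspaces N n (\<lambda>i. undetectable_subspace n (C i) A)"
    by (auto simp: undetectable_subspace_eq simp flip: prod_subspaces_Int)
  finally show ?thesis .
qed

theorem lemma1:
  fixes n N p :: nat and A H :: "real mat" and C :: "nat \<Rightarrow> real mat" and m :: "nat \<Rightarrow> nat"
    and E :: "(nat \<times> nat) set"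
  assumes "A \<in> carrier_mat n n"
    and "\<And>i. i < N \<Longrightarrow> C i \<in> carrier_mat (m i) n"
    and "H \<in> carrier_mat p n"
    and "E \<subseteq> {0..<N} \<times> {0..<N}"
    and "\<And>i. (i, i) \<notin> E"
  shows "detectable (n * N)
           (vstack (block_diag N n C) (kron (laplacian N E) H)) (kron (1\<^sub>m N) A)
         \<longleftrightarrow>
         unobservable_subspace (n * N) (kron (laplacian N E) H) (kron (1\<^sub>m N) A)
           \<inter> prod_subspaces N n (\<lambda>i. undetectable_subspace n (C i) A) = {0\<^sub>v (n * N)}"
proof -
  have "kron (laplacian N E) H \<in> carrier_mat (N * p) (N * n)"
    using assms(3) by (simp add: kron_def laplacian_def)
  from undetectable_subspace_vstack_block_diag[OF assms(1,2) this]
  show ?thesis by (simp add: detectable_def mult.commute[of n N])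
qed

end
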